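(* Let $G$ be a finite abelian group, $T \subsetneq G$ a non-empty subset, and fix $x \in G$ with $T + x \ne T$. Put $T^{\uparrow} = T + x$, $C^{\uparrow} = T^{\uparrow}\setminus T$, $C^{\downarrow} = T \setminus T^{\uparrow}$ and $A = T \cup T^{\uparrow}$. Let $d \ge 1$ and let $X$ be a hole in $A^d$. Suppose that $C_{i,d} \subset X$ for some $0 \le i \le d$. Then $(X \setminus C_{i,d})^{\dagger}$ is a hole in $A^{d+1}$.
   Context: For integers $1 \le i \le e$, $C_{i,e} = C^{\downarrow}\times\dots\times C^{\uparrow}\times\dots\times C^{\downarrow} \subset A^e$ ($e$ factors, $C^{\uparrow}$ in the $i$-th factor, $C^{\downarrow}$ elsewhere), and $C_{0,e} = (C^{\downarrow})^e$. A copy of $T$ in $G^e$ is a translate $\mathsf{T}_j + y$ ($y\in G^e$, $1\le j\le e$), where $\mathsf{T}_j$ is the set of points of $G^e$ with $j$-th coordinate in $T$ and other coordinates $0$; a set is $T$-tilable if it is a disjoint union of copies of $T$. A set $X \subset A^e$ is a hole in $A^e$ if $A^e \setminus X$ is $T$-tilable. For $X \subset A^e$, define $X^{\dagger} = (X \times C^{\downarrow}) \cup C_{e+1,e+1} \subset A^{e+1}$. *)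

theory Defs
  imports "HOL-Library.Disjoint_Sets"
begin

(* Points of G^e are lists of length e; coordinate j (1-based in the paper) is index j-1. *)

definition Tup :: "'a::ab_group_add set \<Rightarrow> 'a \<Rightarrow> 'a set" where
  "Tup T x = (\<lambda>t. t + x) ` T"

definition Cup :: "'a::ab_group_add set \<Rightarrow> 'a \<Rightarrow> 'a set" where
  "Cup T x = Tup T x - T"

definition Cdown :: "'a::ab_group_add set \<Rightarrow> 'a \<Rightarrow> 'a set" where
  "Cdown T x = T - Tup T x"

definition Aset :: "'a::ab_group_add set \<Rightarrow> 'a \<Rightarrow> 'a set" where
  "Aset T x = T \<union> Tup T x"

definition power_set :: "'a set \<Rightarrow> nat \<Rightarrow> 'a list set" where
  "power_set S e = {xs. length xs = e \<and> set xs \<subseteq> S}"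

(* C_{i,e}: C^up in the i-th factor (1 \<le> i \<le> e), C^down elsewhere; i = 0 gives (C^down)^e *)
definition Cset :: "'a::ab_group_add set \<Rightarrow> 'a \<Rightarrow> nat \<Rightarrow> nat \<Rightarrow> 'a list set" where
  "Cset T x e i = {xs. length xs = e \<and>
      (\<forall>k<e. xs ! k \<in> (if Suc k = i then Cup T x else Cdown T x))}"

definition tcopy :: "'a::ab_group_add set \<Rightarrow> nat \<Rightarrow> nat \<Rightarrow> 'a list \<Rightarrow> 'a list set" where
  "tcopy T e j y = {map2 (+) y ((replicate e 0)[j - 1 := t]) | t. t \<in> T}"

definition copies :: "'a::ab_group_add set \<Rightarrow> nat \<Rightarrow> 'a list set set" where
  "copies T e = {tcopy T e j y | j y. 1 \<le> j \<and> j \<le> e \<and> length y = e}"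

definition tilable :: "'a::ab_group_add set \<Rightarrow> nat \<Rightarrow> 'a list set \<Rightarrow> bool" where
  "tilable T e S \<longleftrightarrow> (\<exists>P. P \<subseteq> copies T e \<and> disjoint P \<and> \<Union>P = S)"

definition hole :: "'a::ab_group_add set \<Rightarrow> 'a \<Rightarrow> nat \<Rightarrow> 'a list set \<Rightarrow> bool" where
  "hole T x e X \<longleftrightarrow> X \<subseteq> power_set (Aset T x) e \<and>
      tilable T e (power_set (Aset T x) e - X)"

definition dagger :: "'a::ab_group_add set \<Rightarrow> 'a \<Rightarrow> nat \<Rightarrow> 'a list set \<Rightarrow> 'a list set" where
  "dagger T x e X = {xs @ [c] | xs c. xs \<in> X \<and> c \<in> Cdown T x} \<union> Cset T x (Suc e) (Suc e)"

end

theory Submission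
  imports Defs
begin

text \<open>Write \<open>A = T \<union> (T + x)\<close> and split it as \<open>C\<^sup>\<down> \<union> (T \<inter> (T + x)) \<union> C\<^sup>\<up>\<close>. Sorting the points of
  \<open>A\<^sup>d\<^sup>+\<^sup>1\<close> outside \<open>(X - C\<^sub>i\<^sub>,\<^sub>d)\<^sup>\<dagger>\<close> by their last coordinate, the complement is the disjoint union of
  \<open>C\<^sub>i\<^sub>,\<^sub>d \<times> T\<close>, \<open>(A\<^sup>d - C\<^sub>i\<^sub>,\<^sub>d) \<times> (T \<inter> (T + x))\<close>, \<open>(A\<^sup>d - X) \<times> C\<^sup>\<down>\<close> and \<open>(A\<^sup>d - C\<^sub>0\<^sub>,\<^sub>d) \<times> C\<^sup>\<up>\<close>.
  The first is a union of copies of \<open>T\<close> along the last axis; each of the others is a tilable set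
  times an arbitrary set, hence tilable layer by layer. Tilability of \<open>A\<^sup>d - X\<close> is the hypothesis, and
  \<open>A\<^sup>d\<close> minus any box \<open>\<Prod>\<^sub>k C\<^sub>k\<close> with \<open>C\<^sub>k \<in> {C\<^sup>\<up>, C\<^sup>\<down>}\<close> is tilable by induction on the dimension, since
  \<open>A - C\<^sup>\<up> = T\<close> and \<open>A - C\<^sup>\<down> = T + x\<close> are copies of \<open>T\<close>.\<close>

definition snoc_prod :: "'a list set \<Rightarrow> 'a set \<Rightarrow> 'a list set" where
  "snoc_prod S B = {p @ [a] | p a. p \<in> S \<and> a \<in> B}"

lemma mem_snoc_prod: "xs \<in> snoc_prod S B \<longleftrightarrow> xs \<noteq> [] \<and> butlast xs \<in> S \<and> last xs \<in> B"
  unfolding snoc_prod_def by (cases xs rule: rev_cases) auto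

lemma mem_power_set_Suc:
  "xs \<in> power_set S (Suc d) \<longleftrightarrow> xs \<noteq> [] \<and> butlast xs \<in> power_set S d \<and> last xs \<in> S"
  unfolding power_set_def by (cases xs rule: rev_cases) auto

lemma tilable_empty: "tilable T e {}"
  unfolding tilable_def by (rule exI[of _ "{}"]) auto

lemma tilable_UN:
  assumes "\<And>i. i \<in> I \<Longrightarrow> tilable T e (S i)" and "disjoint_family_on S I"
  shows "tilable T e (\<Union>i\<in>I. S i)"
proof -
  obtain P where P: "\<And>i. i \<in> I \<Longrightarrow> P i \<subseteq> copies T e \<and> disjoint (P i) \<and> \<Union>(P i) = S i"
    using assms(1) unfolding tilable_def by metis
  have "\<Union>(\<Union>i\<in>I. P i) = (\<Union>i\<in>I. \<Union>(P i))"
    by blast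
  also have "\<dots> = (\<Union>i\<in>I. S i)"
    using P by simp
  finally have "\<Union>(\<Union>i\<in>I. P i) = (\<Union>i\<in>I. S i)" .
  moreover have "disjoint (\<Union>i\<in>I. P i)"
    using P assms(2) by (intro disjoint_UN) (auto simp: disjoint_family_on_def)
  ultimately show ?thesis
    using P unfolding tilable_def by (intro exI[of _ "\<Union>i\<in>I. P i"]) blast
qed

lemma tilable_Un:
  assumes "tilable T e A" and "tilable T e B" and "A \<inter> B = {}"
  shows "tilable T e (A \<union> B)"
proof -
  obtain P Q where "P \<subseteq> copies T e" "disjoint P" "\<Union>P = A"
    and "Q \<subseteq> copies T e" "disjoint Q" "\<Union>Q = B"
    using assms(1,2) unfolding tilable_def by blast
  then show ?thesis
    using assms(3) disjoint_union unfolding tilable_def by (intro exI[of _ "P \<union> Q"]) auto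
qed

lemma replicate_update_Suc:
  "j < d \<Longrightarrow> (replicate (Suc d) 0)[j := t] = (replicate d 0)[j := t] @ [0]"
  by (simp add: replicate_append_same[symmetric] list_update_append)

lemma replicate_update_last: "(replicate (Suc d) 0)[d := t] = replicate d 0 @ [t]"
  by (simp add: replicate_append_same[symmetric] list_update_append)

lemma tcopy_snoc:
  assumes "1 \<le> j" and "j \<le> d" and "length y = d"
  shows "(\<lambda>p. p @ [a]) ` tcopy T d j y = tcopy T (Suc d) j (y @ [a])"
proof -
  have "map2 (+) (y @ [a]) ((replicate (Suc d) 0)[j - 1 := t]) =
      map2 (+) y ((replicate d 0)[j - 1 := t]) @ [a]" for t
  proof -
    have "(replicate (Suc d) 0)[j - 1 := t] = (replicate d 0)[j - 1 := t] @ [0]"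
      using assms by (intro replicate_update_Suc) auto
    then show ?thesis using assms by simp
  qed
  then show ?thesis unfolding tcopy_def by auto
qed

lemma map2_plus_replicate_zero: "map2 (+) p (replicate (length p) (0::'a::monoid_add)) = p"
  by (induction p) auto

lemma tcopy_last:
  assumes "length p = d"
  shows "tcopy T (Suc d) (Suc d) (p @ [g]) = snoc_prod {p} (Tup T g)"
proof -
  have "map2 (+) (p @ [g]) ((replicate (Suc d) 0)[d := t]) = p @ [t + g]" for t
    unfolding replicate_update_last using assms map2_plus_replicate_zero[of p]
    by (simp add: add.commute)
  then show ?thesis unfolding tcopy_def snoc_prod_def Tup_def by auto
qed

lemma tilable_snoc:
  assumes "tilable T d S"
  shows "tilable T (Suc d) ((\<lambda>p. p @ [a]) ` S)"
proof -
  obtain P where P: "P \<subseteq> copies T d" "disjoint P" "\<Union>P = S"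
    using assms unfolding tilable_def by blast
  let ?P' = "(`) (\<lambda>p. p @ [a]) ` P"
  have "?P' \<subseteq> copies T (Suc d)"
  proof
    fix c' assume "c' \<in> ?P'"
    then obtain j y where "c' = (\<lambda>p. p @ [a]) ` tcopy T d j y" "1 \<le> j" "j \<le> d" "length y = d"
      using P(1) unfolding copies_def by blast
    then have "c' = tcopy T (Suc d) j (y @ [a])"
      by (simp add: tcopy_snoc)
    then show "c' \<in> copies T (Suc d)"
      unfolding copies_def using \<open>1 \<le> j\<close> \<open>j \<le> d\<close> \<open>length y = d\<close> by fastforce
  qed
  moreover have "disjoint ?P'"
    using P(2) by (rule disjoint_image[rotated]) (simp add: inj_on_def)
  ultimately show ?thesis
    using P(3) unfolding tilable_def by (intro exI[of _ ?P']) auto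
qed

lemma tilable_snoc_prod:
  assumes "tilable T d S"
  shows "tilable T (Suc d) (snoc_prod S B)"
proof -
  have "snoc_prod S B = (\<Union>a\<in>B. (\<lambda>p. p @ [a]) ` S)"
    unfolding snoc_prod_def by auto
  moreover have "disjoint_family_on (\<lambda>a. (\<lambda>p. p @ [a]) ` S) B"
    unfolding disjoint_family_on_def by auto
  ultimately show ?thesis
    using assms by (simp add: tilable_UN tilable_snoc)
qed

lemma tilable_snoc_prod_Tup:
  assumes "\<And>p. p \<in> S \<Longrightarrow> length p = d"
  shows "tilable T (Suc d) (snoc_prod S (Tup T g))"
proof -
  have "snoc_prod S (Tup T g) = (\<Union>p\<in>S. snoc_prod {p} (Tup T g))"
    unfolding snoc_prod_def by blast
  moreover have "tilable T (Suc d) (snoc_prod {p} (Tup T g))" if "p \<in> S" for p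
  proof -
    have "snoc_prod {p} (Tup T g) \<in> copies T (Suc d)"
      using assms[OF that] tcopy_last[symmetric] unfolding copies_def by fastforce
    then show ?thesis
      unfolding tilable_def by (intro exI[of _ "{snoc_prod {p} (Tup T g)}"]) auto
  qed
  moreover have "disjoint_family_on (\<lambda>p. snoc_prod {p} (Tup T g)) S"
    by (auto simp: disjoint_family_on_def mem_snoc_prod)
  ultimately show ?thesis by (simp add: tilable_UN)
qed

definition updown_box :: "'a::ab_group_add set \<Rightarrow> 'a \<Rightarrow> nat \<Rightarrow> (nat \<Rightarrow> bool) \<Rightarrow> 'a list set" where
  "updown_box T x e D =
     {xs. length xs = e \<and> (\<forall>k<e. xs ! k \<in> (if D k then Cup T x else Cdown T x))}"

lemma mem_updown_box_Suc:
  "xs \<in> updown_box T x (Suc d) D \<longleftrightarrow>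
     xs \<noteq> [] \<and> butlast xs \<in> updown_box T x d D \<and> last xs \<in> (if D d then Cup T x else Cdown T x)"
proof (cases xs rule: rev_cases)
  case (snoc p a)
  then show ?thesis
    unfolding updown_box_def
    by (auto simp: nth_append less_Suc_eq)
qed (simp add: updown_box_def)

lemma updown_box_subset_power_set: "updown_box T x d D \<subseteq> power_set (Aset T x) d"
  unfolding updown_box_def power_set_def Aset_def Cup_def Cdown_def
  by (force simp: in_set_conv_nth split: if_splits)

lemma Tup_zero: "Tup T 0 = T"
  unfolding Tup_def by simp

lemma Aset_diff_Cup: "Aset T x - Cup T x = Tup T 0"
  and Aset_diff_Cdown: "Aset T x - Cdown T x = Tup T x"
  unfolding Aset_def Cup_def Cdown_def Tup_def by auto

lemma tilable_power_set_diff_updown_box: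
  "tilable T d (power_set (Aset T x) d - updown_box T x d D)"
proof (induction d)
  case 0
  have "power_set (Aset T x) 0 - updown_box T x 0 D = {}"
    unfolding power_set_def updown_box_def by auto
  then show ?case by (metis tilable_empty)
next
  case (Suc d)
  let ?A = "Aset T x" and ?B = "updown_box T x d D"
  let ?C = "if D d then Cup T x else Cdown T x"
  have "power_set ?A (Suc d) - updown_box T x (Suc d) D =
      snoc_prod (power_set ?A d - ?B) ?A \<union> snoc_prod ?B (?A - ?C)"
    using updown_box_subset_power_set[of T x d D]
    by (auto simp: mem_snoc_prod mem_power_set_Suc mem_updown_box_Suc)
  moreover have "tilable T (Suc d) (snoc_prod ?B (?A - ?C))"
    using tilable_snoc_prod_Tup[of ?B d T]
    by (simp add: Aset_diff_Cup Aset_diff_Cdown updown_box_def)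
  moreover have "snoc_prod (power_set ?A d - ?B) ?A \<inter> snoc_prod ?B (?A - ?C) = {}"
    by (auto simp: mem_snoc_prod)
  ultimately show ?case
    using tilable_Un tilable_snoc_prod[OF Suc.IH] by metis
qed

lemma Cset_eq_updown_box: "Cset T x d i = updown_box T x d (\<lambda>k. Suc k = i)"
  unfolding Cset_def updown_box_def by simp

lemma Cset_subset_power_set: "Cset T x d i \<subseteq> power_set (Aset T x) d"
  unfolding Cset_eq_updown_box by (rule updown_box_subset_power_set)

lemma Cset_last: "Cset T x (Suc d) (Suc d) = snoc_prod (Cset T x d 0) (Cup T x)"
proof -
  have "updown_box T x d (\<lambda>k. k = d) = updown_box T x d (\<lambda>k. False)"
    unfolding updown_box_def by auto
  then show ?thesis
    unfolding Cset_eq_updown_box by (auto simp: mem_snoc_prod mem_updown_box_Suc)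
qed

lemma dagger_eq: "dagger T x d Y = snoc_prod Y (Cdown T x) \<union> snoc_prod (Cset T x d 0) (Cup T x)"
  unfolding dagger_def Cset_last snoc_prod_def by blast

lemma power_set_diff_dagger:
  assumes "X \<subseteq> power_set (Aset T x) d" and "Cset T x d i \<subseteq> X"
  shows "power_set (Aset T x) (Suc d) - dagger T x d (X - Cset T x d i) =
      snoc_prod (Cset T x d i) T \<union>
      snoc_prod (power_set (Aset T x) d - Cset T x d i) (T \<inter> Tup T x) \<union>
      snoc_prod (power_set (Aset T x) d - X) (Cdown T x) \<union>
      snoc_prod (power_set (Aset T x) d - Cset T x d 0) (Cup T x)"
  using assms Cset_subset_power_set[of T x d i] Cset_subset_power_set[of T x d 0]
  unfolding dagger_eq
  by (auto simp: mem_snoc_prod mem_power_set_Suc Aset_def Cup_def Cdown_def)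

lemma hole_dagger:
  assumes "hole T x d X" and "Cset T x d i \<subseteq> X"
  shows "hole T x (Suc d) (dagger T x d (X - Cset T x d i))"
proof -
  let ?A = "power_set (Aset T x) d" and ?Ci = "Cset T x d i" and ?C0 = "Cset T x d 0"
  let ?P1 = "snoc_prod ?Ci T" and ?P2 = "snoc_prod (?A - ?Ci) (T \<inter> Tup T x)"
    and ?P3 = "snoc_prod (?A - X) (Cdown T x)" and ?P4 = "snoc_prod (?A - ?C0) (Cup T x)"
  have X: "X \<subseteq> ?A" and tilable_X: "tilable T d (?A - X)"
    using assms(1) unfolding hole_def by auto
  have "dagger T x d (X - ?Ci) \<subseteq> power_set (Aset T x) (Suc d)"
    using X Cset_subset_power_set[of T x d 0] unfolding dagger_eq
    by (auto simp: mem_snoc_prod mem_power_set_Suc Aset_def Cup_def Cdown_def)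
  moreover have "tilable T (Suc d) (?P1 \<union> ?P2 \<union> ?P3 \<union> ?P4)"
  proof (intro tilable_Un)
    show "tilable T (Suc d) ?P1"
      using tilable_snoc_prod_Tup[of ?Ci d T 0] by (simp add: Tup_zero Cset_def)
    show "tilable T (Suc d) ?P2" "tilable T (Suc d) ?P4"
      by (intro tilable_snoc_prod, simp only: Cset_eq_updown_box tilable_power_set_diff_updown_box)+
    show "tilable T (Suc d) ?P3"
      using tilable_X by (rule tilable_snoc_prod)
    show "?P1 \<inter> ?P2 = {}" "(?P1 \<union> ?P2) \<inter> ?P3 = {}" "(?P1 \<union> ?P2 \<union> ?P3) \<inter> ?P4 = {}"
      using assms(2) by (auto simp: mem_snoc_prod Cup_def Cdown_def)
  qed
  ultimately show ?thesis
    unfolding hole_def power_set_diff_dagger[OF X assms(2)] by (rule conjI)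
qed

theorem proposition11:
  fixes T :: "'a::{ab_group_add, finite} set" and x :: 'a
    and d i :: nat and X :: "'a list set"
  assumes "T \<noteq> {}" and "T \<subset> UNIV"
    and "Tup T x \<noteq> T"
    and "d \<ge> 1"
    and "hole T x d X"
    and "i \<le> d"
    and "Cset T x d i \<subseteq> X"
  shows "hole T x (Suc d) (dagger T x d (X - Cset T x d i))"
  using assms(5,7) by (rule hole_dagger)

end
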